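(* Let $\gamma=(\gamma_1,\dots,\gamma_b)$ be a parallel map on $V=V_1\oplus\cdots\oplus V_b$, $V_i\cong(\mathbb F_2)^m$, with $0\gamma=0$. Let $U$ be a subspace of $V$ of dimension $n-1$. Suppose that for every $i\notin J_U$, $\gamma_i$ is differentially $2^r$-uniform with $r<m$ and strongly $(r-1)$-anti-invariant, and for every $j\in J_U$, $\gamma_j$ is differentially $2^r$-uniform with $r<m-1$ and strongly $r$-anti-invariant. If $\gamma$ maps $\mathcal{LA}_U(W_1|W_2)$ onto a non-trivial partition $\mathcal L(W)$, then $W_1$, $W_2$, $W$ are walls and $W_1=W_2=W$; in particular $\mathcal{LA}_U(W_1|W_2)$ is linear.
   Context: Let $m,b>1$, $n=mb$, $V=(\mathbb F_2)^n=V_1\oplus\cdots\oplus V_b$, $V_i\cong(\mathbb F_2)^m$. Permutations act on the right. A parallel map is $\gamma\in\mathrm{Sym}(V)$ with $(v_1\oplus\cdots\oplus v_b)\gamma=v_1\gamma_1\oplus\cdots\oplus v_b\gamma_b$, $\gamma_i\in\mathrm{Sym}(V_i)$. A wall is $\bigoplus_{i\in I}V_i$ with $\emptyset\ne I\subsetneq\{1,\dots,b\}$. $J_U=\{j: V_j\cap U\subsetneq V_j\}$. $f:(\mathbb F_2)^m\to(\mathbb F_2)^m$ is differentially $\delta$-uniform if $\delta=\max_{a\ne0,b}|\{x:f(x+a)+f(x)=b\}|$; for $f(0)=0$, $f$ is strongly $s$-anti-invariant if for all subspaces $U',W'$ with $f(U')=W'$, either $\dim U'=\dim W'<m-s$ or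 $U'=W'=(\mathbb F_2)^m$. A permutation maps $\mathcal A$ onto $\mathcal B$ if it sends the blocks of $\mathcal A$ exactly onto those of $\mathcal B$; trivial partitions are the singleton partition and $\{V\}$. $\mathcal L(W)=\{W+v:v\in V\}$. For subspaces $W_1,W_2\subseteq U$, $\mathcal{LA}_U(W_1|W_2)=\{W_1+v:v\in U\}\cup\{(W_2+\bar v)+v:v\in U\}$ for any $\bar v\in V\setminus U$. *)

theory Defs
  imports Main
begin

text \<open>Vectors over F_2 are represented as functions nat => bool (bool = F_2,
  addition = exclusive or); (F_2)^d is the set of such functions vanishing at
  every coordinate >= d.\<close>

type_synonym vec = "nat \<Rightarrow> bool"

definition vzero :: vec where "vzero = (\<lambda>k. False)"

definition vadd :: "vec \<Rightarrow> vec \<Rightarrow> vec" where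
  "vadd u v = (\<lambda>k. u k \<noteq> v k)"

definition F2space :: "nat \<Rightarrow> vec set" where
  "F2space d = {v. \<forall>k\<ge>d. \<not> v k}"

text \<open>Linear subspaces of (F_2)^d (over F_2 these are exactly the subsets
  containing 0 and closed under addition).\<close>
definition subspace :: "nat \<Rightarrow> vec set \<Rightarrow> bool" where
  "subspace d S \<longleftrightarrow> S \<subseteq> F2space d \<and> vzero \<in> S \<and> (\<forall>u\<in>S. \<forall>v\<in>S. vadd u v \<in> S)"

definition sdim :: "vec set \<Rightarrow> nat" where
  "sdim S = (THE k. card S = 2 ^ k)"

text \<open>The block V_i (0-based i) of V = (F_2)^(m*b): vectors supported on the
  coordinates i*m, ..., (i+1)*m - 1.\<close>
definition blk :: "nat \<Rightarrow> nat \<Rightarrow> vec set" where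
  "blk m i = {v. \<forall>k. v k \<longrightarrow> i * m \<le> k \<and> k < Suc i * m}"

definition wall :: "nat \<Rightarrow> nat \<Rightarrow> vec set \<Rightarrow> bool" where
  "wall m b W \<longleftrightarrow> (\<exists>I. I \<noteq> {} \<and> I \<subset> {..<b} \<and>
     W = {v \<in> F2space (m * b). \<forall>k. v k \<longrightarrow> k div m \<in> I})"

definition JU :: "nat \<Rightarrow> nat \<Rightarrow> vec set \<Rightarrow> nat set" where
  "JU m b U = {j \<in> {..<b}. blk m j \<inter> U \<subset> blk m j}"

definition component :: "nat \<Rightarrow> nat \<Rightarrow> vec \<Rightarrow> vec" where
  "component m i v = (\<lambda>k. k < m \<and> v (i * m + k))"

definition parallel :: "nat \<Rightarrow> nat \<Rightarrow> (nat \<Rightarrow> vec \<Rightarrow> vec) \<Rightarrow> vec \<Rightarrow> vec" where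
  "parallel m b \<gamma> v = (\<lambda>k. k < m * b \<and> \<gamma> (k div m) (component m (k div m) v) (k mod m))"

definition diff_uniform :: "nat \<Rightarrow> (vec \<Rightarrow> vec) \<Rightarrow> nat \<Rightarrow> bool" where
  "diff_uniform m f \<delta> \<longleftrightarrow>
     \<delta> = Max {card {x \<in> F2space m. vadd (f (vadd x a)) (f x) = c} | a c.
               a \<in> F2space m \<and> a \<noteq> vzero \<and> c \<in> F2space m}"

definition strongly_anti_invariant :: "nat \<Rightarrow> nat \<Rightarrow> (vec \<Rightarrow> vec) \<Rightarrow> bool" where
  "strongly_anti_invariant m s f \<longleftrightarrow> f vzero = vzero \<and>
     (\<forall>U' W'. subspace m U' \<and> subspace m W' \<and> f ` U' = W' \<longrightarrow>
        (sdim U' = sdim W' \<and> sdim U' < m - s) \<or> (U' = F2space m \<and> W' = F2space m))"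

definition coset :: "vec set \<Rightarrow> vec \<Rightarrow> vec set" where
  "coset W v = (\<lambda>w. vadd w v) ` W"

definition cosets :: "nat \<Rightarrow> vec set \<Rightarrow> vec set set" where
  "cosets d W = {coset W v | v. v \<in> F2space d}"

text \<open>LA_U(W1|W2), with the auxiliary vector vbar (assumed outside U).\<close>
definition LA :: "vec set \<Rightarrow> vec set \<Rightarrow> vec set \<Rightarrow> vec \<Rightarrow> vec set set" where
  "LA U W1 W2 vbar = {coset W1 v | v. v \<in> U} \<union> {coset (coset W2 vbar) v | v. v \<in> U}"

definition maps_onto :: "(vec \<Rightarrow> vec) \<Rightarrow> vec set set \<Rightarrow> vec set set \<Rightarrow> bool" where
  "maps_onto g A B \<longleftrightarrow> (\<lambda>X. g ` X) ` A = B"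

definition trivial_partition :: "nat \<Rightarrow> vec set set \<Rightarrow> bool" where
  "trivial_partition d P \<longleftrightarrow> P = {{v} | v. v \<in> F2space d} \<or> P = {F2space d}"

end

theory Submission
  imports Defs
begin

text \<open>Write \<Gamma> for the parallel map. As \<Gamma> 0 = 0 and \<Gamma> sends each block of
  LA_U(W1|W2) onto a coset of W, we get \<Gamma>(W1) = W and \<Gamma>(x + a) + \<Gamma>(x) \<in> W for
  x \<in> U, a \<in> W1. Restricted to a block V_i this says that \<gamma>_i maps K_i = W1 \<inter> V_i
  onto W \<inter> V_i and that its derivatives in directions \<alpha> \<in> K_i, taken at the points of
  U \<inter> V_i, lie in W \<inter> V_i. Since U is a hyperplane, U \<inter> V_i has at least 2^(m-1)
  elements, and all 2^m if i \<notin> J_U. Counting with differential 2^r-uniformity shows that a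
  nonzero K_i has dimension at least m - s, where s is the anti-invariance index of \<gamma>_i, so
  strong s-anti-invariance gives V_i \<subseteq> W1.
  If some w \<in> W1 had a nonzero component w_i with V_i not inside W1, then W \<inter> V_i = 0,
  which makes the derivative of \<gamma>_i in direction w_i constant on U \<inter> V_i, again
  contradicting differential uniformity. Hence W1 is the sum of the blocks it contains. The map
  \<Gamma> preserves block supports, so W, and by \<Gamma>(vbar + a) + \<Gamma>(vbar) \<in> W also W2, lie
  in this wall and coincide with it by cardinality; non-triviality of L(W) makes the wall
  proper and nonzero. Finally LA_U(W1|W1) = L(W1) because U is a hyperplane.\<close>

section \<open>Vectors and subspaces over F_2\<close>

lemma vadd_assoc: "vadd (vadd u v) w = vadd u (vadd v w)"
  by (auto simp: vadd_def fun_eq_iff)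

lemma vadd_self [simp]: "vadd u u = vzero"
  by (auto simp: vadd_def vzero_def fun_eq_iff)

lemma vadd_vzero [simp]: "vadd u vzero = u" "vadd vzero u = u"
  by (auto simp: vadd_def vzero_def fun_eq_iff)

lemma vadd_cancel [simp]: "vadd (vadd u v) v = u" "vadd u (vadd u v) = v" "vadd (vadd u v) u = v"
  by (auto simp: vadd_def fun_eq_iff)

lemma vadd_eq_vzero_iff: "vadd u v = vzero \<longleftrightarrow> u = v"
  by (auto simp: vadd_def vzero_def fun_eq_iff)

lemma vadd_eq_self_iff [simp]: "vadd u v = u \<longleftrightarrow> v = vzero"
  by (auto simp: vadd_def vzero_def fun_eq_iff)

lemma vadd_apply: "vadd u v k \<longleftrightarrow> u k \<noteq> v k"
  by (simp add: vadd_def)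

lemma inj_vadd: "inj (\<lambda>v. vadd v c)"
  by (rule inj_onI) (metis vadd_cancel(1))

lemma F2space_vadd: "u \<in> F2space d \<Longrightarrow> v \<in> F2space d \<Longrightarrow> vadd u v \<in> F2space d"
  by (auto simp: F2space_def vadd_def)

lemma F2space_vzero [simp]: "vzero \<in> F2space d"
  by (auto simp: F2space_def vzero_def)

lemma F2space_eq_image_Pow: "F2space d = (\<lambda>S k. k \<in> S) ` Pow {..<d}"
proof
  show "F2space d \<subseteq> (\<lambda>S k. k \<in> S) ` Pow {..<d}"
  proof
    fix v assume "v \<in> F2space d"
    then have "{k. v k} \<in> Pow {..<d}"
      by (auto simp: F2space_def not_le[symmetric])
    then show "v \<in> (\<lambda>S k. k \<in> S) ` Pow {..<d}"
      by (rule image_eqI[rotated]) auto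
  qed
qed (auto simp: F2space_def)

lemma finite_F2space [simp]: "finite (F2space d)"
  by (simp add: F2space_eq_image_Pow)

lemma card_F2space: "card (F2space d) = 2 ^ d"
proof -
  have "inj_on (\<lambda>S k. k \<in> S) (Pow {..<d})"
    by (auto simp: inj_on_def fun_eq_iff)
  then show ?thesis
    by (simp add: F2space_eq_image_Pow card_image card_Pow)
qed

lemma subspace_F2space: "subspace d (F2space d)"
  by (simp add: subspace_def F2space_vadd)

lemma subspace_vzero: "subspace d S \<Longrightarrow> vzero \<in> S"
  by (simp add: subspace_def)

lemma subspace_vadd: "subspace d S \<Longrightarrow> u \<in> S \<Longrightarrow> v \<in> S \<Longrightarrow> vadd u v \<in> S"
  by (simp add: subspace_def)

lemma subspace_subset: "subspace d S \<Longrightarrow> S \<subseteq> F2space d"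
  by (simp add: subspace_def)

lemma subspace_finite: "subspace d S \<Longrightarrow> finite S"
  using finite_subset[OF subspace_subset finite_F2space] .

lemma F2space_0: "F2space 0 = {vzero}"
  by (auto simp: F2space_def vzero_def)

lemma F2space_Suc: "F2space d = {v \<in> F2space (Suc d). \<not> v d}"
  by (auto simp: F2space_def Suc_le_eq) (metis le_neq_implies_less)

lemma subspace_last_coordinate_zero:
  assumes "subspace (Suc d) S"
  shows "subspace d {v \<in> S. \<not> v d}"
  using assms unfolding subspace_def F2space_Suc[of d]
  by (auto simp: vadd_def vzero_def)

lemma subspace_card_power_of_two: "subspace d S \<Longrightarrow> \<exists>k. card S = 2 ^ k"
proof (induction d arbitrary: S)
  case 0
  then have "S = {vzero}"
    by (auto simp: subspace_def F2space_def vzero_def)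
  then show ?case
    by (intro exI[of _ 0]) simp
next
  case (Suc d)
  let ?S0 = "{v \<in> S. \<not> v d}" and ?S1 = "{v \<in> S. v d}"
  obtain k where k: "card ?S0 = 2 ^ k"
    using Suc.IH[OF subspace_last_coordinate_zero[OF Suc.prems]] by blast
  show ?case
  proof (cases "?S1 = {}")
    case True
    then have "S = ?S0" by blast
    with k show ?thesis by auto
  next
    case False
    then obtain v0 where v0: "v0 \<in> S" "v0 d" by blast
    have "bij_betw (\<lambda>v. vadd v v0) ?S0 ?S1"
      by (rule bij_betw_byWitness[where f' = "\<lambda>v. vadd v v0"])
        (use v0 subspace_vadd[OF Suc.prems] in \<open>auto simp: vadd_apply\<close>)
    then have "card ?S1 = card ?S0"
      by (simp add: bij_betw_same_card)
    have "card S = card (?S0 \<union> ?S1)"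
      by (rule arg_cong[where f = card]) blast
    also have "\<dots> = card ?S0 + card ?S1"
      using subspace_finite[OF Suc.prems] by (simp add: card_Un_disjoint disjoint_iff)
    also have "\<dots> = 2 ^ Suc k"
      using k \<open>card ?S1 = card ?S0\<close> by simp
    finally show ?thesis ..
  qed
qed

lemma sdim_eq: "card S = 2 ^ k \<Longrightarrow> sdim S = k"
  unfolding sdim_def by (rule the_equality) auto

lemma card_eq_power_sdim: "subspace d S \<Longrightarrow> card S = 2 ^ sdim S"
  using subspace_card_power_of_two sdim_eq by metis

lemma mem_coset_iff: "x \<in> coset X c \<longleftrightarrow> vadd x c \<in> X"
  unfolding coset_def
proof
  assume "vadd x c \<in> X"
  then show "x \<in> (\<lambda>w. vadd w c) ` X"
    by (rule rev_image_eqI) simp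
qed auto

lemma vadd_translate_cancel: "vadd (vadd x c) (vadd y c) = vadd x y"
  by (auto simp: vadd_def fun_eq_iff)

lemma vadd_mem_if_same_coset:
  "subspace d W \<Longrightarrow> x \<in> coset W c \<Longrightarrow> y \<in> coset W c \<Longrightarrow> vadd x y \<in> W"
  unfolding mem_coset_iff using subspace_vadd vadd_translate_cancel by metis

lemma coset_eq_self: "subspace d W \<Longrightarrow> c \<in> W \<Longrightarrow> coset W c = W"
  unfolding set_eq_iff mem_coset_iff using subspace_vadd vadd_cancel(1) by metis

lemma card_coset: "card (coset W c) = card W"
  unfolding coset_def by (rule card_image) (rule inj_on_subset[OF inj_vadd subset_UNIV])

lemma coset_subset_F2space: "subspace d W \<Longrightarrow> c \<in> F2space d \<Longrightarrow> coset W c \<subseteq> F2space d"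
  unfolding coset_def using subspace_subset F2space_vadd by blast

lemma coset_vzero [simp]: "coset X vzero = X"
  unfolding coset_def by simp

lemma coset_coset: "coset (coset X a) c = coset X (vadd a c)"
  unfolding coset_def image_image by (simp add: vadd_assoc)

lemma cosets_singleton: "cosets d {vzero} = {{v} | v. v \<in> F2space d}"
  by (simp add: cosets_def coset_def)

lemma cosets_F2space: "cosets d (F2space d) = {F2space d}"
  unfolding cosets_def
  using coset_eq_self[OF subspace_F2space] F2space_vzero by blast

lemma hyperplane_vadd_mem:
  assumes U: "subspace n U" "card U = 2 ^ (n - 1)"
    and x: "x \<in> F2space n - U" and y: "y \<in> F2space n - U"
  shows "vadd x y \<in> U"
proof -
  have "n \<noteq> 0"
    using x subspace_vzero[OF U(1)] F2space_0 by (cases n) auto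
  have disjoint: "U \<inter> coset U y = {}"
  proof (rule ccontr)
    assume "U \<inter> coset U y \<noteq> {}"
    then obtain z where "z \<in> U" "vadd z y \<in> U"
      by (auto simp: mem_coset_iff)
    then have "vadd z (vadd z y) \<in> U"
      by (rule subspace_vadd[OF U(1)])
    with y show False by simp
  qed
  have "finite (coset U y)"
    using subspace_finite[OF U(1)] by (simp add: coset_def)
  then have "card (U \<union> coset U y) = 2 ^ (n - 1) + 2 ^ (n - 1)"
    using card_Un_disjoint[OF subspace_finite[OF U(1)] _ disjoint] U(2) card_coset by simp
  also have "\<dots> = card (F2space n)"
    using \<open>n \<noteq> 0\<close> by (cases n) (simp_all add: card_F2space)
  finally have "card (U \<union> coset U y) = card (F2space n)" .
  moreover have "U \<union> coset U y \<subseteq> F2space n"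
    using subspace_subset[OF U(1)] coset_subset_F2space[OF U(1)] y by blast
  ultimately have "U \<union> coset U y = F2space n"
    using card_subset_eq[OF finite_F2space] by blast
  with x show ?thesis
    by (auto simp: mem_coset_iff)
qed

lemma LA_eq_cosets:
  assumes U: "subspace n U" "card U = 2 ^ (n - 1)" and vbar: "vbar \<in> F2space n - U"
  shows "LA U X X vbar = cosets n X"
proof
  show "LA U X X vbar \<subseteq> cosets n X"
    unfolding LA_def cosets_def coset_coset
    using subspace_subset[OF U(1)] vbar F2space_vadd by blast
  show "cosets n X \<subseteq> LA U X X vbar"
  proof
    fix Y assume "Y \<in> cosets n X"
    then obtain v where v: "v \<in> F2space n" "Y = coset X v"
      unfolding cosets_def by blast
    show "Y \<in> LA U X X vbar"
    proof (cases "v \<in> U")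
      case True
      with v show ?thesis unfolding LA_def by blast
    next
      case False
      then have "vadd vbar v \<in> U"
        using hyperplane_vadd_mem[OF U vbar] v by blast
      moreover have "Y = coset (coset X vbar) (vadd vbar v)"
        using v by (simp add: coset_coset flip: vadd_assoc)
      ultimately show ?thesis unfolding LA_def by blast
    qed
  qed
qed

section \<open>The block decomposition\<close>

text \<open>block_embed m i identifies (F_2)^m with the block V_i; in these coordinates
  block_slice m i X is X \<inter> V_i, and block_sum m b I is the sum of the blocks V_i, i \<in> I.\<close>

definition block_embed :: "nat \<Rightarrow> nat \<Rightarrow> vec \<Rightarrow> vec" where
  "block_embed m i t = (\<lambda>k. i * m \<le> k \<and> k < Suc i * m \<and> t (k - i * m))"

definition block_slice :: "nat \<Rightarrow> nat \<Rightarrow> vec set \<Rightarrow> vec set" where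
  "block_slice m i X = {t \<in> F2space m. block_embed m i t \<in> X}"

definition block_sum :: "nat \<Rightarrow> nat \<Rightarrow> nat set \<Rightarrow> vec set" where
  "block_sum m b I = {v \<in> F2space (m * b). \<forall>k. v k \<longrightarrow> k div m \<in> I}"

lemma component_vadd: "component m i (vadd u v) = vadd (component m i u) (component m i v)"
  by (auto simp: component_def vadd_def fun_eq_iff)

lemma component_vzero [simp]: "component m i vzero = vzero"
  by (auto simp: component_def vzero_def fun_eq_iff)

lemma component_in_F2space [simp]: "component m i v \<in> F2space m"
  by (auto simp: component_def F2space_def)

lemma component_div_mod: "0 < m \<Longrightarrow> component m (k div m) v (k mod m) = v k"
  by (simp add: component_def)

lemma F2space_eqI_components:
  assumes m: "0 < m" and x: "x \<in> F2space (m * b)" and y: "y \<in> F2space (m * b)"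
    and components: "\<And>i. i < b \<Longrightarrow> component m i x = component m i y"
  shows "x = y"
proof
  fix k
  show "x k = y k"
  proof (cases "k < m * b")
    case True
    then have "k div m < b"
      using m by (simp add: div_less_iff_less_mult mult.commute)
    then show ?thesis
      using components component_div_mod[OF m] by metis
  next
    case False
    with x y show ?thesis by (auto simp: F2space_def)
  qed
qed

lemma block_embed_vadd: "block_embed m i (vadd s t) = vadd (block_embed m i s) (block_embed m i t)"
  by (auto simp: block_embed_def vadd_def fun_eq_iff)

lemma block_embed_vzero [simp]: "block_embed m i vzero = vzero"
  by (auto simp: block_embed_def vzero_def fun_eq_iff)

lemma block_embed_in_F2space: "i < b \<Longrightarrow> block_embed m i t \<in> F2space (m * b)"
  using mult_le_mono1[of "Suc i" b m]
  by (auto simp: block_embed_def F2space_def mult.commute)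

lemma block_embed_in_blk: "block_embed m i t \<in> blk m i"
  by (auto simp: block_embed_def blk_def)

lemma component_block_embed: "t \<in> F2space m \<Longrightarrow> component m i (block_embed m i t) = t"
  by (auto simp: component_def block_embed_def F2space_def fun_eq_iff) (meson not_less)

lemma component_block_embed_other: "j \<noteq> i \<Longrightarrow> component m j (block_embed m i t) = vzero"
proof -
  assume "j \<noteq> i"
  have False if "k < m" "i * m \<le> j * m + k" "j * m + k < Suc i * m" for k
    using div_nat_eqI[of m i "j * m + k"] that \<open>j \<noteq> i\<close> by (simp add: mult.commute)
  then show ?thesis
    by (auto simp: component_def block_embed_def vzero_def fun_eq_iff)
qed

lemma block_embed_component:
  assumes "v \<in> blk m i"
  shows "block_embed m i (component m i v) = v"
proof
  fix k
  show "block_embed m i (component m i v) k = v k"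
  proof (cases "i * m \<le> k \<and> k < m + i * m")
    case True
    then have "k - i * m < m" "i * m + (k - i * m) = k"
      by linarith+
    with True show ?thesis
      by (simp add: block_embed_def component_def)
  next
    case False
    with assms show ?thesis
      by (auto simp: blk_def block_embed_def)
  qed
qed

lemma block_embed_component_if_other_components_vanish:
  assumes m: "0 < m" and i: "i < b" and v: "v \<in> F2space (m * b)"
    and vanish: "\<And>j. j < b \<Longrightarrow> j \<noteq> i \<Longrightarrow> component m j v = vzero"
  shows "block_embed m i (component m i v) = v"
proof (rule F2space_eqI_components[OF m block_embed_in_F2space[OF i] v])
  fix j assume "j < b"
  then show "component m j (block_embed m i (component m i v)) = component m j v"
    by (cases "j = i") (simp_all add: component_block_embed component_block_embed_other vanish)
qed

lemma block_slice_eq_F2space_iff: "block_slice m i X = F2space m \<longleftrightarrow> blk m i \<subseteq> X"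
proof
  assume "block_slice m i X = F2space m"
  then have embed_mem: "block_embed m i (component m i v) \<in> X" for v
    unfolding block_slice_def using component_in_F2space by blast
  show "blk m i \<subseteq> X"
  proof
    fix v assume "v \<in> blk m i"
    with embed_mem[of v] show "v \<in> X"
      by (simp add: block_embed_component)
  qed
qed (auto simp: block_slice_def block_embed_in_blk)

lemma mem_block_sum_iff:
  assumes m: "0 < m" and v: "v \<in> F2space (m * b)"
  shows "v \<in> block_sum m b I \<longleftrightarrow> (\<forall>i<b. i \<notin> I \<longrightarrow> component m i v = vzero)"
proof
  assume "v \<in> block_sum m b I"
  then have support: "v k \<Longrightarrow> k div m \<in> I" for k
    by (simp add: block_sum_def)
  show "\<forall>i<b. i \<notin> I \<longrightarrow> component m i v = vzero"
  proof (intro allI impI)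
    fix i assume "i \<notin> I"
    have "\<not> v (i * m + t)" if "t < m" for t
      using support[of "i * m + t"] \<open>i \<notin> I\<close> that m by auto
    then show "component m i v = vzero"
      by (auto simp: component_def vzero_def fun_eq_iff)
  qed
next
  assume vanish: "\<forall>i<b. i \<notin> I \<longrightarrow> component m i v = vzero"
  have "k div m \<in> I" if "v k" for k
  proof -
    have "k < m * b"
      using v that by (auto simp: F2space_def not_le[symmetric])
    then have "k div m < b"
      using m by (simp add: div_less_iff_less_mult mult.commute)
    moreover have "component m (k div m) v \<noteq> vzero"
      using component_div_mod[OF m, of k v] that by (auto simp: vzero_def)
    ultimately show ?thesis
      using vanish by blast
  qed
  with v show "v \<in> block_sum m b I"
    by (simp add: block_sum_def)
qed

lemma block_sum_empty: "block_sum m b {} = {vzero}"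
  by (auto simp: block_sum_def F2space_def vzero_def fun_eq_iff)

lemma block_sum_all:
  assumes "0 < m"
  shows "block_sum m b {..<b} = F2space (m * b)"
proof -
  have "k div m < b" if "v \<in> F2space (m * b)" "v k" for v k
  proof -
    have "k < m * b"
      using that by (auto simp: F2space_def not_le[symmetric])
    then show ?thesis
      using assms by (simp add: div_less_iff_less_mult mult.commute)
  qed
  then show ?thesis
    by (auto simp: block_sum_def)
qed

lemma finite_block_sum: "finite (block_sum m b I)"
  by (simp add: block_sum_def)

lemma div_eq_iff_bounds: "0 < m \<Longrightarrow> k div m = i \<longleftrightarrow> i * m \<le> k \<and> k < Suc i * m"
proof
  assume "0 < m" "k div m = i"
  moreover have "k = k div m * m + k mod m"
    by simp
  moreover have "k mod m < m"
    using \<open>0 < m\<close> by simp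
  ultimately show "i * m \<le> k \<and> k < Suc i * m"
    by simp
qed (simp add: div_nat_eqI mult.commute)

lemma blk_iff_div: "0 < m \<Longrightarrow> v \<in> blk m i \<longleftrightarrow> (\<forall>k. v k \<longrightarrow> k div m = i)"
  by (simp add: blk_def div_eq_iff_bounds)

lemma block_supported_mem_subspace:
  assumes m: "0 < m" and X: "subspace n X" and J: "finite J" and blocks: "\<forall>i\<in>J. blk m i \<subseteq> X"
  shows "(\<forall>k. v k \<longrightarrow> k div m \<in> J) \<Longrightarrow> v \<in> X"
  using J blocks
proof (induction J arbitrary: v rule: finite_induct)
  case empty
  then have "v = vzero"
    by (auto simp: vzero_def fun_eq_iff)
  then show ?case
    using subspace_vzero[OF X] by simp
next
  case (insert i J)
  define v_out where "v_out = (\<lambda>k. v k \<and> k div m \<noteq> i)"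
  define v_in where "v_in = (\<lambda>k. v k \<and> k div m = i)"
  have "\<forall>k. v_out k \<longrightarrow> k div m \<in> J"
    using insert.prems(1) by (auto simp: v_out_def)
  then have "v_out \<in> X"
    using insert.IH insert.prems(2) by blast
  moreover have "v_in \<in> blk m i"
    using m by (simp add: v_in_def blk_iff_div)
  then have "v_in \<in> X"
    using insert.prems(2) by blast
  moreover have "v = vadd v_out v_in"
    by (auto simp: v_out_def v_in_def vadd_def fun_eq_iff)
  ultimately show ?case
    using subspace_vadd[OF X] by simp
qed

lemma block_sum_subset:
  assumes m: "0 < m" and X: "subspace n X" and blocks: "\<forall>i\<in>I. blk m i \<subseteq> X"
  shows "block_sum m b I \<subseteq> X"
proof
  fix v assume v: "v \<in> block_sum m b I"
  have "v \<in> F2space (m * b)"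
    using v by (simp add: block_sum_def)
  then have "v \<in> block_sum m b {..<b}"
    by (simp only: block_sum_all[OF m])
  with v have "k div m \<in> I \<inter> {..<b}" if "v k" for k
    using that by (simp add: block_sum_def)
  then show "v \<in> X"
    using block_supported_mem_subspace[OF m X, of "I \<inter> {..<b}"] blocks by blast
qed

lemma wall_block_sum_if_nontrivial:
  assumes m: "0 < m" and I: "I \<subseteq> {..<b}"
    and nontrivial: "\<not> trivial_partition (m * b) (cosets (m * b) (block_sum m b I))"
  shows "wall m b (block_sum m b I)"
proof -
  have "I \<noteq> {}"
    using nontrivial by (auto simp: block_sum_empty cosets_singleton trivial_partition_def)
  moreover have "I \<noteq> {..<b}"
    using nontrivial by (auto simp: block_sum_all[OF m] cosets_F2space trivial_partition_def)
  ultimately show ?thesis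
    using I by (auto simp: wall_def block_sum_def)
qed

lemma subspace_block_slice: "subspace n X \<Longrightarrow> subspace m (block_slice m i X)"
  by (auto simp: subspace_def block_slice_def block_embed_vadd F2space_vadd)

lemma JU_iff: "j \<in> JU m b U \<longleftrightarrow> j < b \<and> \<not> blk m j \<subseteq> U"
  by (auto simp: JU_def)

lemma card_block_slice_hyperplane:
  assumes U: "subspace (m * b) U" "card U = 2 ^ (m * b - 1)"
    and i: "i < b" and not_blk: "\<not> blk m i \<subseteq> U"
  shows "2 ^ m \<le> 2 * card (block_slice m i U)"
proof -
  let ?T = "block_slice m i U"
  obtain v0 where v0: "v0 \<in> blk m i" "v0 \<notin> U"
    using not_blk by blast
  define t0 where "t0 = component m i v0"
  have embed_t0: "block_embed m i t0 = v0"
    using block_embed_component[OF v0(1)] by (simp add: t0_def)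
  have "(\<lambda>t. vadd t t0) ` (F2space m - ?T) \<subseteq> ?T"
  proof
    fix x assume "x \<in> (\<lambda>t. vadd t t0) ` (F2space m - ?T)"
    then obtain t where t: "t \<in> F2space m" "block_embed m i t \<notin> U" and x: "x = vadd t t0"
      by (auto simp: block_slice_def)
    have "v0 \<in> F2space (m * b)"
      using block_embed_in_F2space[OF i, of m t0] embed_t0 by simp
    then have "vadd (block_embed m i t) v0 \<in> U"
      using hyperplane_vadd_mem[OF U] t(2) block_embed_in_F2space[OF i] v0(2) by blast
    moreover have "x \<in> F2space m"
      using F2space_vadd[OF t(1) component_in_F2space] by (simp add: x t0_def)
    ultimately show "x \<in> ?T"
      by (simp add: x block_slice_def block_embed_vadd embed_t0)
  qed
  moreover have T: "?T \<subseteq> F2space m"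
    by (auto simp: block_slice_def)
  ultimately have "card (F2space m - ?T) \<le> card ?T"
    using card_inj_on_le[OF inj_on_subset[OF inj_vadd subset_UNIV]]
      finite_subset[OF T finite_F2space] by blast
  moreover have "card (F2space m - ?T) = card (F2space m) - card ?T"
    using card_Diff_subset[OF finite_subset[OF T finite_F2space] T] .
  moreover have "card ?T \<le> card (F2space m)"
    using card_mono[OF finite_F2space T] .
  ultimately show ?thesis
    by (simp add: card_F2space)
qed

lemma F2space_parallel [simp]: "parallel m b \<gamma> x \<in> F2space (m * b)"
  by (auto simp: parallel_def F2space_def)

lemma component_parallel:
  assumes i: "i < b" and "\<gamma> i (component m i x) \<in> F2space m"
  shows "component m i (parallel m b \<gamma> x) = \<gamma> i (component m i x)"
proof
  fix k
  show "component m i (parallel m b \<gamma> x) k = \<gamma> i (component m i x) k"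
  proof (cases "k < m")
    case True
    then have "(i * m + k) div m = i" "(i * m + k) mod m = k"
      by simp_all
    moreover have "i * m + k < m * b"
      using True mult_le_mono1[of "Suc i" b m] i by (simp add: mult.commute)
    ultimately show ?thesis
      using True by (simp add: component_def parallel_def)
  next
    case False
    with assms(2) show ?thesis
      by (simp add: component_def F2space_def)
  qed
qed

section \<open>Derivatives and differential uniformity\<close>

definition derivative :: "(vec \<Rightarrow> vec) \<Rightarrow> vec \<Rightarrow> vec \<Rightarrow> vec" where
  "derivative f a x = vadd (f (vadd x a)) (f x)"

lemma card_derivative_fibre_le:
  assumes "diff_uniform m f \<delta>" and "a \<in> F2space m" "a \<noteq> vzero" and "c \<in> F2space m"
  shows "card {x \<in> F2space m. derivative f a x = c} \<le> \<delta>"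
proof -
  let ?fibre = "\<lambda>a c. card {x \<in> F2space m. vadd (f (vadd x a)) (f x) = c}"
  let ?S = "{?fibre a c | a c. a \<in> F2space m \<and> a \<noteq> vzero \<and> c \<in> F2space m}"
  have "?S \<subseteq> (\<lambda>(a, c). ?fibre a c) ` (F2space m \<times> F2space m)"
    by auto
  then have "finite ?S"
    by (rule finite_subset) simp
  moreover have "?fibre a c \<in> ?S"
    using assms by blast
  ultimately show ?thesis
    using assms(1) Max_ge by (simp add: diff_uniform_def derivative_def)
qed

lemma card_le_derivative_values:
  assumes du: "diff_uniform m f \<delta>" and a: "a \<in> F2space m" "a \<noteq> vzero"
    and C: "C \<subseteq> F2space m" and T: "T \<subseteq> F2space m"
    and into_C: "\<forall>t\<in>T. derivative f a t \<in> C"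
  shows "card T \<le> card C * \<delta>"
proof -
  let ?fibre = "\<lambda>c. {x \<in> F2space m. derivative f a x = c}"
  have finite_C: "finite C"
    using finite_subset[OF C finite_F2space] .
  have "T \<subseteq> (\<Union>c\<in>C. ?fibre c)"
    using T into_C by blast
  then have "card T \<le> card (\<Union>c\<in>C. ?fibre c)"
    by (rule card_mono[rotated]) (simp add: finite_C)
  also have "\<dots> \<le> (\<Sum>c\<in>C. card (?fibre c))"
    using finite_C by (intro card_UN_le) simp
  also have "\<dots> \<le> card C * \<delta>"
    using sum_bounded_above[of C "\<lambda>c. card (?fibre c)" \<delta>]
      card_derivative_fibre_le[OF du a] C by (simp add: subset_iff)
  finally show ?thesis .
qed

lemma derivative_nonzero:
  assumes "inj_on f (F2space m)" and "a \<in> F2space m" "a \<noteq> vzero" and "x \<in> F2space m"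
  shows "derivative f a x \<noteq> vzero"
proof
  assume "derivative f a x = vzero"
  then have "f (vadd x a) = f x"
    by (simp add: derivative_def vadd_eq_vzero_iff)
  then have "vadd x a = x"
    using inj_on_eq_iff[OF assms(1) F2space_vadd[OF assms(4,2)] assms(4)] by blast
  with assms(3) show False
    by simp
qed

lemma subspace_eq_F2space_if_anti_invariant:
  assumes "strongly_anti_invariant m s f" and "subspace m K" "subspace m (f ` K)"
    and "m - s \<le> sdim K"
  shows "K = F2space m"
  using assms unfolding strongly_anti_invariant_def by fastforce

section \<open>Parallel maps sending LA_U(W1|W2) onto cosets of W\<close>

locale parallel_map_onto_cosets =
  fixes m b :: nat and \<gamma> :: "nat \<Rightarrow> vec \<Rightarrow> vec"
    and U W1 W2 W :: "vec set" and vbar :: vec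
  assumes m_pos: "0 < m"
    and perm: "\<forall>i<b. bij_betw (\<gamma> i) (F2space m) (F2space m)"
    and zero: "parallel m b \<gamma> vzero = vzero"
    and U_subspace: "subspace (m * b) U" and U_card: "card U = 2 ^ (m * b - 1)"
    and W1_subspace: "subspace (m * b) W1" and W1_subset_U: "W1 \<subseteq> U"
    and W2_subspace: "subspace (m * b) W2" and W2_subset_U: "W2 \<subseteq> U"
    and W_subspace: "subspace (m * b) W"
    and vbar: "vbar \<in> F2space (m * b) - U"
    and maps: "maps_onto (parallel m b \<gamma>) (LA U W1 W2 vbar) (cosets (m * b) W)"
begin

abbreviation \<Gamma> :: "vec \<Rightarrow> vec" where
  "\<Gamma> \<equiv> parallel m b \<gamma>"

lemma gamma_in_F2space: "i < b \<Longrightarrow> t \<in> F2space m \<Longrightarrow> \<gamma> i t \<in> F2space m"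
  using perm by (auto simp: bij_betw_def)

lemma inj_on_gamma: "i < b \<Longrightarrow> inj_on (\<gamma> i) (F2space m)"
  using perm by (simp add: bij_betw_def)

lemma component_Gamma: "i < b \<Longrightarrow> component m i (\<Gamma> x) = \<gamma> i (component m i x)"
  by (simp add: component_parallel gamma_in_F2space)

lemma gamma_vzero: "i < b \<Longrightarrow> \<gamma> i vzero = vzero"
  using component_Gamma[of i vzero] zero by simp

lemma gamma_eq_iff: "i < b \<Longrightarrow> s \<in> F2space m \<Longrightarrow> t \<in> F2space m \<Longrightarrow> \<gamma> i s = \<gamma> i t \<longleftrightarrow> s = t"
  using inj_on_gamma by (auto simp: inj_on_def)

lemma component_Gamma_eq_vzero_iff:
  "i < b \<Longrightarrow> component m i (\<Gamma> x) = vzero \<longleftrightarrow> component m i x = vzero"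
  using gamma_eq_iff[of i "component m i x" vzero] by (simp add: component_Gamma gamma_vzero)

lemma W1_subset_F2space: "W1 \<subseteq> F2space (m * b)"
  using W1_subset_U subspace_subset[OF U_subspace] by blast

lemma Gamma_block_embed:
  assumes i: "i < b" and t: "t \<in> F2space m"
  shows "\<Gamma> (block_embed m i t) = block_embed m i (\<gamma> i t)"
proof (rule F2space_eqI_components[OF m_pos F2space_parallel block_embed_in_F2space[OF i]])
  fix j assume "j < b"
  then show "component m j (\<Gamma> (block_embed m i t)) = component m j (block_embed m i (\<gamma> i t))"
    using t i by (cases "j = i")
      (simp_all add: component_Gamma component_block_embed component_block_embed_other
        gamma_in_F2space gamma_vzero)
qed

lemma inj_on_Gamma: "inj_on \<Gamma> (F2space (m * b))"
proof (rule inj_onI)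
  fix x y assume x: "x \<in> F2space (m * b)" and y: "y \<in> F2space (m * b)" and "\<Gamma> x = \<Gamma> y"
  then have "component m i x = component m i y" if "i < b" for i
    using that gamma_eq_iff component_Gamma by (metis component_in_F2space)
  then show "x = y"
    by (rule F2space_eqI_components[OF m_pos x y])
qed

lemma Gamma_mem_block_sum_iff:
  "x \<in> F2space (m * b) \<Longrightarrow> \<Gamma> x \<in> block_sum m b I \<longleftrightarrow> x \<in> block_sum m b I"
  by (simp add: mem_block_sum_iff[OF m_pos] component_Gamma_eq_vzero_iff)

lemma image_LA_block:
  assumes "X \<in> LA U W1 W2 vbar"
  shows "\<exists>c. \<Gamma> ` X = coset W c"
proof -
  have "\<Gamma> ` X \<in> cosets (m * b) W"
    using maps assms unfolding maps_onto_def by blast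
  then show ?thesis
    by (auto simp: cosets_def)
qed

lemma Gamma_vadd_mem_if_same_block:
  assumes "X \<in> LA U W1 W2 vbar" and "x \<in> X" "y \<in> X"
  shows "vadd (\<Gamma> x) (\<Gamma> y) \<in> W"
proof -
  obtain c where "\<Gamma> ` X = coset W c"
    using image_LA_block[OF assms(1)] by blast
  with assms(2,3) show ?thesis
    using vadd_mem_if_same_coset[OF W_subspace] by blast
qed

lemma W1_mem_LA: "W1 \<in> LA U W1 W2 vbar"
  using subspace_vzero[OF U_subspace] coset_vzero unfolding LA_def by blast

lemma image_W1: "\<Gamma> ` W1 = W"
proof -
  obtain c where c: "\<Gamma> ` W1 = coset W c"
    using image_LA_block[OF W1_mem_LA] by blast
  have "vzero \<in> \<Gamma> ` W1"
    using zero subspace_vzero[OF W1_subspace] by force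
  then have "c \<in> W"
    by (simp add: c mem_coset_iff)
  then show ?thesis
    by (simp add: c coset_eq_self[OF W_subspace])
qed

lemma card_W: "card W = card W1"
  using card_image[OF inj_on_subset[OF inj_on_Gamma W1_subset_F2space]] image_W1 by simp

lemma W2_coset_mem_LA: "coset W2 vbar \<in> LA U W1 W2 vbar"
  using subspace_vzero[OF U_subspace] coset_vzero unfolding LA_def by blast

lemma card_W2: "card W2 = card W"
proof -
  obtain c where c: "\<Gamma> ` coset W2 vbar = coset W c"
    using image_LA_block[OF W2_coset_mem_LA] by blast
  have "coset W2 vbar \<subseteq> F2space (m * b)"
    using coset_subset_F2space[OF W2_subspace] vbar by blast
  then have "card (\<Gamma> ` coset W2 vbar) = card (coset W2 vbar)"
    using card_image inj_on_subset[OF inj_on_Gamma] by blast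
  then show ?thesis
    by (simp add: c card_coset)
qed

lemma derivative_Gamma_mem_W: "x \<in> U \<Longrightarrow> a \<in> W1 \<Longrightarrow> derivative \<Gamma> a x \<in> W"
  using Gamma_vadd_mem_if_same_block[of "coset W1 x" "vadd x a" x]
    subspace_vzero[OF W1_subspace]
  by (auto simp: LA_def mem_coset_iff derivative_def)

lemma derivative_Gamma_vbar_mem_W: "a \<in> W2 \<Longrightarrow> derivative \<Gamma> a vbar \<in> W"
  using Gamma_vadd_mem_if_same_block[OF W2_coset_mem_LA, of "vadd vbar a" vbar]
    subspace_vzero[OF W2_subspace]
  by (simp add: mem_coset_iff derivative_def)

lemma image_block_slice_W1:
  assumes i: "i < b"
  shows "\<gamma> i ` block_slice m i W1 = block_slice m i W"
proof
  show "\<gamma> i ` block_slice m i W1 \<subseteq> block_slice m i W"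
  proof
    fix u assume "u \<in> \<gamma> i ` block_slice m i W1"
    then obtain t where t: "t \<in> F2space m" "block_embed m i t \<in> W1" and u: "u = \<gamma> i t"
      by (auto simp: block_slice_def)
    then have "block_embed m i u \<in> \<Gamma> ` W1"
      using Gamma_block_embed[OF i t(1)] by (metis imageI)
    then show "u \<in> block_slice m i W"
      using gamma_in_F2space[OF i t(1)] by (simp add: block_slice_def image_W1 u)
  qed
  show "block_slice m i W \<subseteq> \<gamma> i ` block_slice m i W1"
  proof
    fix u assume "u \<in> block_slice m i W"
    then have u: "u \<in> F2space m" "block_embed m i u \<in> \<Gamma> ` W1"
      unfolding block_slice_def image_W1 by blast+
    then obtain w where w: "w \<in> W1" "\<Gamma> w = block_embed m i u"
      by (metis imageE)
    have "component m j w = vzero" if "j < b" "j \<noteq> i" for j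
      using component_Gamma_eq_vzero_iff[OF that(1), of w] that(2)
      by (simp add: w(2) component_block_embed_other)
    then have "block_embed m i (component m i w) = w"
      using w(1) W1_subset_F2space by (intro block_embed_component_if_other_components_vanish[OF m_pos i]) auto
    moreover have "\<gamma> i (component m i w) = u"
      using component_Gamma[OF i, of w] w(2) u(1) by (simp add: component_block_embed)
    ultimately show "u \<in> \<gamma> i ` block_slice m i W1"
      using w(1) by (auto simp: block_slice_def)
  qed
qed

lemma derivative_mem_block_slice_W:
  assumes i: "i < b" and t: "t \<in> block_slice m i U" and \<alpha>: "\<alpha> \<in> block_slice m i W1"
  shows "derivative (\<gamma> i) \<alpha> t \<in> block_slice m i W"
proof -
  have tF: "t \<in> F2space m" and \<alpha>F: "\<alpha> \<in> F2space m"
    using t \<alpha> by (simp_all add: block_slice_def)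
  have "derivative \<Gamma> (block_embed m i \<alpha>) (block_embed m i t) \<in> W"
    using derivative_Gamma_mem_W t \<alpha> by (simp add: block_slice_def)
  then have "block_embed m i (derivative (\<gamma> i) \<alpha> t) \<in> W"
    using Gamma_block_embed[OF i] tF F2space_vadd[OF tF \<alpha>F]
    by (simp add: derivative_def block_embed_vadd flip: block_embed_vadd)
  moreover have "derivative (\<gamma> i) \<alpha> t \<in> F2space m"
    using gamma_in_F2space[OF i] tF F2space_vadd[OF tF \<alpha>F] by (simp add: derivative_def F2space_vadd)
  ultimately show ?thesis
    by (simp add: block_slice_def)
qed

text \<open>Outside block i the vector x vanishes and the three terms of z cancel, so z, an element
  of W, is supported on block i.\<close>
lemma derivative_offset_mem_block_slice_W:
  assumes i: "i < b" and t: "t \<in> block_slice m i U" and w: "w \<in> W1"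
  shows "vadd (derivative (\<gamma> i) (component m i w) t) (\<gamma> i (component m i w)) \<in> block_slice m i W"
proof -
  let ?\<alpha> = "component m i w" and ?x = "block_embed m i t"
  define z where "z = vadd (derivative \<Gamma> w ?x) (\<Gamma> w)"
  have tF: "t \<in> F2space m"
    using t by (simp add: block_slice_def)
  have "derivative \<Gamma> w ?x \<in> W" "\<Gamma> w \<in> W"
    using derivative_Gamma_mem_W[OF _ w] t image_W1 w by (auto simp: block_slice_def)
  then have "z \<in> W"
    unfolding z_def by (rule subspace_vadd[OF W_subspace])
  have zF: "z \<in> F2space (m * b)"
    by (simp add: z_def derivative_def F2space_vadd)
  have component_z: "component m j z =
      vadd (vadd (\<gamma> j (vadd (component m j ?x) (component m j w))) (\<gamma> j (component m j ?x)))
        (\<gamma> j (component m j w))" if "j < b" for j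
    using that by (simp add: z_def derivative_def component_Gamma component_vadd)
  have "component m j z = vzero" if "j < b" "j \<noteq> i" for j
    using that component_z by (simp add: component_block_embed_other gamma_vzero)
  then have "block_embed m i (component m i z) = z"
    by (rule block_embed_component_if_other_components_vanish[OF m_pos i zF])
  moreover have "component m i z = vadd (derivative (\<gamma> i) ?\<alpha> t) (\<gamma> i ?\<alpha>)"
    using component_z[OF i] tF by (simp add: component_block_embed derivative_def)
  ultimately show ?thesis
    using \<open>z \<in> W\<close> gamma_in_F2space[OF i] tF
    by (simp add: block_slice_def derivative_def F2space_vadd)
qed

lemma card_block_slice_U: "i \<in> JU m b U \<Longrightarrow> 2 ^ m \<le> 2 * card (block_slice m i U)"
  using card_block_slice_hyperplane[OF U_subspace U_card] by (simp add: JU_iff)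

lemma block_slice_U: "i < b \<Longrightarrow> i \<notin> JU m b U \<Longrightarrow> block_slice m i U = F2space m"
  by (simp add: JU_iff block_slice_eq_F2space_iff)

end

locale anti_invariant_parallel_map_onto_cosets = parallel_map_onto_cosets +
  fixes r :: nat
  assumes outside_JU: "\<forall>i<b. i \<notin> JU m b U \<longrightarrow>
      diff_uniform m (\<gamma> i) (2 ^ r) \<and> r < m \<and> strongly_anti_invariant m (r - 1) (\<gamma> i)"
    and inside_JU: "\<forall>j\<in>JU m b U.
      diff_uniform m (\<gamma> j) (2 ^ r) \<and> r < m - 1 \<and> strongly_anti_invariant m r (\<gamma> j)"
begin

lemma diff_uniform_gamma: "i < b \<Longrightarrow> diff_uniform m (\<gamma> i) (2 ^ r)"
  using outside_JU inside_JU by blast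

text \<open>The derivatives of \<gamma> i in direction \<alpha> at the points of the slice of U are nonzero
  elements of the slice of W, and each value is taken at most 2^r times.\<close>
lemma card_block_slice_U_less:
  assumes i: "i < b" and \<alpha>: "\<alpha> \<in> block_slice m i W1" "\<alpha> \<noteq> vzero"
  shows "card (block_slice m i U) < 2 ^ (sdim (block_slice m i W1) + r)"
proof -
  let ?K = "block_slice m i W1" and ?L = "block_slice m i W" and ?T = "block_slice m i U"
  have K: "subspace m ?K" and L: "subspace m ?L"
    using subspace_block_slice W1_subspace W_subspace by blast+
  have \<alpha>F: "\<alpha> \<in> F2space m"
    using \<alpha> by (simp add: block_slice_def)
  have "card ?T \<le> card (?L - {vzero}) * 2 ^ r"
  proof (rule card_le_derivative_values[OF diff_uniform_gamma[OF i] \<alpha>F \<alpha>(2)])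
    show "?L - {vzero} \<subseteq> F2space m" "?T \<subseteq> F2space m"
      by (auto simp: block_slice_def)
    show "\<forall>t\<in>?T. derivative (\<gamma> i) \<alpha> t \<in> ?L - {vzero}"
    proof
      fix t assume t: "t \<in> ?T"
      then have "t \<in> F2space m"
        by (simp add: block_slice_def)
      then show "derivative (\<gamma> i) \<alpha> t \<in> ?L - {vzero}"
        using derivative_mem_block_slice_W[OF i t \<alpha>(1)]
          derivative_nonzero[OF inj_on_gamma[OF i] \<alpha>F \<alpha>(2)] by blast
    qed
  qed
  also have "\<dots> < 2 ^ sdim ?K * 2 ^ r"
  proof -
    have "card ?L = card ?K"
      using card_image[OF inj_on_subset[OF inj_on_gamma[OF i] subspace_subset[OF K]]]
        image_block_slice_W1[OF i] by simp
    then have "card ?L = 2 ^ sdim ?K"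
      using card_eq_power_sdim[OF K] by simp
    then have "card (?L - {vzero}) < 2 ^ sdim ?K"
      using subspace_finite[OF L] subspace_vzero[OF L] by (simp add: card_Diff_singleton)
    then show ?thesis
      by simp
  qed
  finally show ?thesis
    by (simp add: power_add)
qed

lemma blk_subset_W1_if_block_slice_nonzero:
  assumes i: "i < b" and \<alpha>: "\<alpha> \<in> block_slice m i W1" "\<alpha> \<noteq> vzero"
  shows "blk m i \<subseteq> W1"
proof -
  let ?K = "block_slice m i W1"
  have K: "subspace m ?K" and L: "subspace m (\<gamma> i ` ?K)"
    using subspace_block_slice W1_subspace W_subspace image_block_slice_W1[OF i] by auto
  note small = card_block_slice_U_less[OF i \<alpha>]
  have "?K = F2space m"
  proof (cases "i \<in> JU m b U")
    case True
    then have "(2::nat) ^ m < 2 ^ (sdim ?K + r + 1)"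
      using card_block_slice_U[OF True] small by simp
    then have "m < sdim ?K + r + 1"
      by (rule power_less_imp_less_exp[rotated]) simp
    then have "m - r \<le> sdim ?K"
      by simp
    with True show ?thesis
      using inside_JU subspace_eq_F2space_if_anti_invariant[OF _ K L] by blast
  next
    case False
    then have "(2::nat) ^ m < 2 ^ (sdim ?K + r)"
      using small block_slice_U[OF i] by (simp add: card_F2space)
    then have "m < sdim ?K + r"
      by (rule power_less_imp_less_exp[rotated]) simp
    then have "m - (r - 1) \<le> sdim ?K"
      by simp
    with False show ?thesis
      using outside_JU i subspace_eq_F2space_if_anti_invariant[OF _ K L] by blast
  qed
  then show ?thesis
    by (simp add: block_slice_eq_F2space_iff)
qed

text \<open>If block i were not inside W1, the slice of W would be 0, making every derivative of
  \<gamma> i in direction w_i at the points of the slice of U equal to \<gamma> i w_i; differential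
  uniformity forbids this on a set of more than 2^r points.\<close>
lemma blk_subset_W1_if_component_nonzero:
  assumes w: "w \<in> W1" and i: "i < b" and nonzero: "component m i w \<noteq> vzero"
  shows "blk m i \<subseteq> W1"
proof (rule ccontr)
  assume "\<not> blk m i \<subseteq> W1"
  let ?\<alpha> = "component m i w" and ?T = "block_slice m i U"
  have "block_slice m i W1 \<subseteq> {vzero}"
    using blk_subset_W1_if_block_slice_nonzero[OF i] \<open>\<not> blk m i \<subseteq> W1\<close> by blast
  then have "\<gamma> i ` block_slice m i W1 \<subseteq> {vzero}"
    using gamma_vzero[OF i] by auto
  then have "block_slice m i W \<subseteq> {vzero}"
    by (simp add: image_block_slice_W1[OF i])
  then have derivative_constant: "\<forall>t\<in>?T. derivative (\<gamma> i) ?\<alpha> t \<in> {\<gamma> i ?\<alpha>}"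
    using derivative_offset_mem_block_slice_W[OF i _ w] vadd_eq_vzero_iff by blast
  have "card ?T \<le> card {\<gamma> i ?\<alpha>} * 2 ^ r"
    by (rule card_le_derivative_values[OF diff_uniform_gamma[OF i] component_in_F2space nonzero
          _ _ derivative_constant])
      (auto simp: block_slice_def gamma_in_F2space[OF i])
  moreover have "2 ^ r < card ?T"
  proof (cases "i \<in> JU m b U")
    case True
    then have "(2::nat) ^ (r + 1) < 2 ^ m"
      using inside_JU by (intro power_strict_increasing) auto
    with card_block_slice_U[OF True] show ?thesis
      by simp
  next
    case False
    then have "(2::nat) ^ r < 2 ^ m"
      using outside_JU i by (intro power_strict_increasing) auto
    with block_slice_U[OF i False] show ?thesis
      by (simp add: card_F2space)
  qed
  ultimately show False
    by simp
qed

definition wall_blocks :: "nat set" where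
  "wall_blocks = {i. i < b \<and> blk m i \<subseteq> W1}"

lemma W1_eq_block_sum: "W1 = block_sum m b wall_blocks"
proof
  show "block_sum m b wall_blocks \<subseteq> W1"
    by (rule block_sum_subset[OF m_pos W1_subspace]) (simp add: wall_blocks_def)
  show "W1 \<subseteq> block_sum m b wall_blocks"
  proof
    fix w assume w: "w \<in> W1"
    have "component m i w = vzero" if "i < b" "i \<notin> wall_blocks" for i
      using blk_subset_W1_if_component_nonzero[OF w that(1)] that by (auto simp: wall_blocks_def)
    then show "w \<in> block_sum m b wall_blocks"
      using w W1_subset_F2space by (subst mem_block_sum_iff[OF m_pos]) auto
  qed
qed

lemma W_eq_block_sum: "W = block_sum m b wall_blocks"
proof -
  have "W \<subseteq> block_sum m b wall_blocks"
    using image_W1 W1_eq_block_sum W1_subset_F2space Gamma_mem_block_sum_iff by blast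
  moreover have "card W = card (block_sum m b wall_blocks)"
    using card_W W1_eq_block_sum by simp
  ultimately show ?thesis
    using card_subset_eq[OF finite_block_sum] by blast
qed

lemma W2_eq_block_sum: "W2 = block_sum m b wall_blocks"
proof -
  have "W2 \<subseteq> block_sum m b wall_blocks"
  proof
    fix a assume a: "a \<in> W2"
    have aF: "a \<in> F2space (m * b)"
      using a W2_subset_U subspace_subset[OF U_subspace] by blast
    have "component m j a = vzero" if j: "j < b" "j \<notin> wall_blocks" for j
    proof -
      have "component m j (vadd (\<Gamma> (vadd vbar a)) (\<Gamma> vbar)) = vzero"
        using derivative_Gamma_vbar_mem_W[OF a, unfolded derivative_def] W_eq_block_sum j mem_block_sum_iff[OF m_pos]
          F2space_vadd[OF F2space_parallel F2space_parallel] by blast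
      then have "\<gamma> j (component m j (vadd vbar a)) = \<gamma> j (component m j vbar)"
        by (simp add: component_vadd component_Gamma[OF j(1)] vadd_eq_vzero_iff)
      then have "component m j (vadd vbar a) = component m j vbar"
        using gamma_eq_iff[OF j(1)] by simp
      then show ?thesis
        by (simp add: component_vadd)
    qed
    then show "a \<in> block_sum m b wall_blocks"
      by (simp add: mem_block_sum_iff[OF m_pos aF])
  qed
  moreover have "card W2 = card (block_sum m b wall_blocks)"
    using card_W2 W_eq_block_sum by simp
  ultimately show ?thesis
    using card_subset_eq[OF finite_block_sum] by blast
qed

end

theorem corollary3p11:
  fixes m b r :: nat and \<gamma> :: "nat \<Rightarrow> vec \<Rightarrow> vec"
    and U W1 W2 W :: "vec set" and vbar :: vec
  assumes "m > 1" and "b > 1"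
    and perm: "\<forall>i<b. bij_betw (\<gamma> i) (F2space m) (F2space m)"
    and zero: "parallel m b \<gamma> vzero = vzero"
    and U: "subspace (m * b) U" "sdim U = m * b - 1"
    and notJ: "\<forall>i<b. i \<notin> JU m b U \<longrightarrow>
                 diff_uniform m (\<gamma> i) (2 ^ r) \<and> r < m \<and> strongly_anti_invariant m (r - 1) (\<gamma> i)"
    and inJ: "\<forall>j\<in>JU m b U.
                 diff_uniform m (\<gamma> j) (2 ^ r) \<and> r < m - 1 \<and> strongly_anti_invariant m r (\<gamma> j)"
    and W1: "subspace (m * b) W1" "W1 \<subseteq> U"
    and W2: "subspace (m * b) W2" "W2 \<subseteq> U"
    and vbar: "vbar \<in> F2space (m * b) - U"
    and W: "subspace (m * b) W" "\<not> trivial_partition (m * b) (cosets (m * b) W)"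
    and maps: "maps_onto (parallel m b \<gamma>) (LA U W1 W2 vbar) (cosets (m * b) W)"
  shows "wall m b W1 \<and> wall m b W2 \<and> wall m b W \<and> W1 = W2 \<and> W2 = W
         \<and> LA U W1 W2 vbar = cosets (m * b) W1"
proof -
  have hyperplane: "card U = 2 ^ (m * b - 1)"
    using card_eq_power_sdim[OF U(1)] U(2) by simp
  interpret anti_invariant_parallel_map_onto_cosets m b \<gamma> U W1 W2 W vbar r
    using assms hyperplane by unfold_locales auto
  have "wall m b (block_sum m b wall_blocks)"
    using wall_block_sum_if_nontrivial[OF m_pos _ W(2)[unfolded W_eq_block_sum]]
    by (auto simp: wall_blocks_def)
  then show ?thesis
    using W1_eq_block_sum W2_eq_block_sum W_eq_block_sum LA_eq_cosets[OF U(1) hyperplane vbar]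
    by simp
qed

end
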